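(* Let $D_2>0$, $k_3>0$, $S_2^{in}>0$, and let $\mu_2\in C^1(\mathbb R_+)$ satisfy $\mu_2(0)=0$, $\lim_{s\to\infty}\mu_2(s)=0$, and there exists $S_2^m>0$ with $\mu_2'>0$ on $(0,S_2^m)$ and $\mu_2'<0$ on $(S_2^m,\infty)$. Let $X_2^{1*}$ be a positive constant with $X_2^{1*}<S_2^{in}/k_3$. Define $f_2(x)=\mu_2(S_2^{in}-k_3x)$ on $[0,S_2^{in}/k_3]$, $g_2(x)=D_2(x-X_2^{1*})/x$ for $x>0$, and $x_1^m=(S_2^{in}-S_2^m)/k_3$. Then: \begin{enumerate} \item if $X_2^{1*}\ge x_1^m$, the equation $f_2(x)=g_2(x)$ has a unique solution in $(X_2^{1*},S_2^{in}/k_3)$; \item if $X_2^{1*}<x_1^m$, the equation $f_2(x)=g_2(x)$ has at least one solution in $(X_2^{1*},S_2^{in}/k_3)$; generically, there is an odd number of solutions in this interval. \end{enumerate} *)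

theory Defs
  imports "HOL-Analysis.Analysis"
begin

definition f2 :: "(real \<Rightarrow> real) \<Rightarrow> real \<Rightarrow> real \<Rightarrow> real \<Rightarrow> real" where
  "f2 \<mu> Sin k x = \<mu> (Sin - k * x)"

definition g2 :: "real \<Rightarrow> real \<Rightarrow> real \<Rightarrow> real" where
  "g2 D Xs x = D * (x - Xs) / x"

end

theory Submission
  imports Defs
begin

(* Let h = f2 - g2. Since mu2 rises from mu2(0) = 0 up to S2m and then decreases to its limit 0,
   it is positive on (0, oo); as g2 vanishes at Xs, h(Xs) > 0, while f2 vanishes at Sin/k3 and
   g2 is positive there, so h(Sin/k3) < 0 and the intermediate value theorem gives a zero.
   If Xs >= (Sin - S2m)/k3, the argument Sin - k3 x of mu2 stays in [0, S2m] on the whole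
   interval, so f2 is strictly decreasing while g2 is strictly increasing: the zero is unique.
   If no zero is degenerate, h changes sign at each of them; the zeros are then isolated, hence
   finitely many by compactness, and each one flips the sign of h, so going from h > 0 to h < 0
   takes an odd number of them. *)

definition sign_change_at :: "(real \<Rightarrow> real) \<Rightarrow> real \<Rightarrow> bool" where
  "sign_change_at h z \<longleftrightarrow>
     (\<exists>e>0. \<forall>x y. z - e < x \<longrightarrow> x < z \<longrightarrow> z < y \<longrightarrow> y < z + e \<longrightarrow> h x * h y < 0)"

lemma sign_change_at_if_deriv_nonzero:
  fixes h :: "real \<Rightarrow> real"
  assumes deriv: "(h has_real_derivative d) (at z)" and "d \<noteq> 0" and "h z = 0"
  shows "sign_change_at h z"
proof -
  define q where "q = (\<lambda>y. h y / (y - z))"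
  have "(q \<longlongrightarrow> d) (at z)"
    using deriv \<open>h z = 0\<close> by (simp add: has_field_derivative_iff q_def)
  then have "((\<lambda>y. q y * d) \<longlongrightarrow> d * d) (at z)"
    by (rule tendsto_mult_right)
  moreover have dd: "d * d > 0"
    using \<open>d \<noteq> 0\<close> by (simp add: zero_less_mult_iff linorder_neq_iff disj_commute)
  ultimately have "\<forall>\<^sub>F y in at z. q y * d > 0"
    by (rule order_tendstoD(1))
  then obtain e where "e > 0" and e: "\<And>y. y \<noteq> z \<Longrightarrow> dist y z < e \<Longrightarrow> q y * d > 0"
    unfolding eventually_at by blast
  have "h x * h y < 0" if "z - e < x" "x < z" "z < y" "y < z + e" for x y
  proof -
    have "(q x * d) * (q y * d) > 0"
      using that by (intro mult_pos_pos[OF e e]) (auto simp: dist_real_def)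
    then have "(q x * q y) * (d * d) > 0"
      by (simp add: ac_simps)
    then have "q x * q y > 0"
      using dd by (rule zero_less_mult_pos2)
    moreover have "h x * h y = (q x * q y) * ((x - z) * (y - z))"
      using that by (simp add: q_def)
    moreover have "(x - z) * (y - z) < 0"
      using that by (simp add: mult_neg_pos)
    ultimately show ?thesis
      by (simp add: mult_pos_neg)
  qed
  then show ?thesis
    unfolding sign_change_at_def using \<open>e > 0\<close> by blast
qed

lemma sign_change_at_isolated_zero:
  assumes "sign_change_at h z"
  shows "\<exists>e>0. \<forall>y. y \<noteq> z \<longrightarrow> dist y z < e \<longrightarrow> h y \<noteq> 0"
proof -
  obtain e where "e > 0"
    and e: "\<And>x y. z - e < x \<Longrightarrow> x < z \<Longrightarrow> z < y \<Longrightarrow> y < z + e \<Longrightarrow> h x * h y < 0"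
    using assms unfolding sign_change_at_def by blast
  have "h y \<noteq> 0" if "y \<noteq> z" "dist y z < e" for y
  proof (cases "y < z")
    case True
    then show ?thesis
      using e[of y "z + e / 2"] that \<open>e > 0\<close> by (auto simp: dist_real_def)
  next
    case False
    then show ?thesis
      using e[of "z - e / 2" y] that \<open>e > 0\<close> by (auto simp: dist_real_def)
  qed
  with \<open>e > 0\<close> show ?thesis
    by blast
qed

lemma same_sign_if_no_zero:
  fixes h :: "real \<Rightarrow> real"
  assumes "continuous_on {a..b} h" "a \<le> b" "\<And>x. x \<in> {a..b} \<Longrightarrow> h x \<noteq> 0"
  shows "h a * h b > 0"
proof (rule ccontr)
  assume "\<not> h a * h b > 0"
  then have "h a \<le> 0 \<and> 0 \<le> h b \<or> h b \<le> 0 \<and> 0 \<le> h a"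
    by (auto simp: zero_less_mult_iff)
  then obtain x where "x \<in> {a..b}" "h x = 0"
    using IVT'[of h a 0 b] IVT2'[of h b 0 a] assms by force
  with assms show False
    by blast
qed

lemma zero_between_opposite_signs:
  fixes h :: "real \<Rightarrow> real"
  assumes "continuous_on {a..b} h" "a \<le> b" "h a * h b < 0"
  shows "\<exists>x \<in> {a<..<b}. h x = 0"
proof (rule ccontr)
  assume "\<not> (\<exists>x \<in> {a<..<b}. h x = 0)"
  then have "h x \<noteq> 0" if "x \<in> {a..b}" for x
    using that assms(3) by (cases "x = a \<or> x = b") auto
  then show False
    using same_sign_if_no_zero[OF assms(1,2)] assms(3) by fastforce
qed

lemma finite_zeros_if_sign_changes:
  fixes h :: "real \<Rightarrow> real"
  assumes cont: "continuous_on {a..b} h" and "h a \<noteq> 0" "h b \<noteq> 0"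
    and "\<And>z. z \<in> {a<..<b} \<Longrightarrow> h z = 0 \<Longrightarrow> sign_change_at h z"
  shows "finite {x \<in> {a<..<b}. h x = 0}"
proof -
  let ?Z = "{x \<in> {a<..<b}. h x = 0}"
  have "\<not> z islimpt ?Z" if "z \<in> {a..b}" for z
  proof
    assume limpt: "z islimpt ?Z"
    have "closed {x \<in> {a..b}. h x = 0}"
      using cont by (rule continuous_closed_preimage_constant) simp
    moreover have "z islimpt {x \<in> {a..b}. h x = 0}"
      using limpt by (rule islimpt_subset) auto
    ultimately have "z \<in> {a..b}" "h z = 0"
      using closed_limpt by blast+
    with assms have "sign_change_at h z"
      by (cases "z = a \<or> z = b") auto
    then obtain e where "e > 0" "\<forall>y. y \<noteq> z \<longrightarrow> dist y z < e \<longrightarrow> h y \<noteq> 0"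
      by (blast dest: sign_change_at_isolated_zero)
    with limpt show False
      unfolding islimpt_approachable by fastforce
  qed
  then have "finite ({a..b} \<inter> ?Z)"
    by (intro finite_not_islimpt_in_compact) auto
  moreover have "{a..b} \<inter> ?Z = ?Z"
    by auto
  ultimately show ?thesis
    by simp
qed

lemma sign_flip_past_least_zero:
  fixes h :: "real \<Rightarrow> real"
  assumes cont: "continuous_on {a..b} h" and "h a \<noteq> 0"
    and z: "z \<in> {a<..<b}" "h z = 0" "sign_change_at h z"
    and least: "\<And>x. x \<in> {a<..<z} \<Longrightarrow> h x \<noteq> 0"
  obtains c where "z < c" "c < b" "h a * h c < 0"
    "{x \<in> {c<..<b}. h x = 0} = {x \<in> {a<..<b}. h x = 0} - {z}"
proof -
  obtain e where "e > 0"
    and e: "\<And>x y. z - e < x \<Longrightarrow> x < z \<Longrightarrow> z < y \<Longrightarrow> y < z + e \<Longrightarrow> h x * h y < 0"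
    using z(3) unfolding sign_change_at_def by blast
  define y where "y = max (z - e / 2) ((a + z) / 2)"
  define c where "c = min (z + e / 2) ((z + b) / 2)"
  have y: "a < y" "y < z" "z - e < y" and c: "z < c" "c < b" "c < z + e"
    using z(1) \<open>e > 0\<close> by (auto simp: y_def c_def max_def min_def)
  have "h x \<noteq> 0" if "x \<in> {a..y}" for x
    using that \<open>h a \<noteq> 0\<close> y least[of x] by (cases "x = a") auto
  moreover have "continuous_on {a..y} h"
    using cont by (rule continuous_on_subset) (use y z(1) in auto)
  ultimately have "h a * h y > 0"
    using same_sign_if_no_zero[of a y h] y by simp
  moreover have "h y * h c < 0"
    using e y c by blast
  ultimately have "h a * h c < 0"
    by (metis mult_less_0_iff not_less_iff_gr_or_eq zero_less_mult_iff)
  moreover have "{x \<in> {c<..<b}. h x = 0} = {x \<in> {a<..<b}. h x = 0} - {z}"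
  proof
    show "{x \<in> {c<..<b}. h x = 0} \<subseteq> {x \<in> {a<..<b}. h x = 0} - {z}"
      using c z(1) by auto
    show "{x \<in> {a<..<b}. h x = 0} - {z} \<subseteq> {x \<in> {c<..<b}. h x = 0}"
    proof
      fix x
      assume x: "x \<in> {x \<in> {a<..<b}. h x = 0} - {z}"
      then have "z < x"
        using least[of x] by (cases "x < z") auto
      moreover have "h x \<noteq> 0" if "z < x" "x \<le> c"
        using e[of y x] y c that by auto
      ultimately have "c < x"
        using x by fastforce
      with x show "x \<in> {x \<in> {c<..<b}. h x = 0}"
        by auto
    qed
  qed
  ultimately show ?thesis
    using c that by blast
qed

lemma odd_card_zeros_iff_opposite_signs:
  fixes h :: "real \<Rightarrow> real"
  assumes "continuous_on {a..b} h" "a \<le> b" "h a \<noteq> 0" "h b \<noteq> 0"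
    and "finite {x \<in> {a<..<b}. h x = 0}"
    and "\<And>z. z \<in> {a<..<b} \<Longrightarrow> h z = 0 \<Longrightarrow> sign_change_at h z"
  shows "odd (card {x \<in> {a<..<b}. h x = 0}) \<longleftrightarrow> h a * h b < 0"
  using assms
proof (induction "card {x \<in> {a<..<b}. h x = 0}" arbitrary: a)
  case 0
  then have "h x \<noteq> 0" if "x \<in> {a..b}" for x
    using that by (cases "x = a \<or> x = b") auto
  then show ?case
    using same_sign_if_no_zero[OF "0.prems"(1,2)] "0.hyps" by fastforce
next
  case (Suc n)
  define Z where "Z = {x \<in> {a<..<b}. h x = 0}"
  have "Z \<noteq> {}" "finite Z"
    using Suc.hyps(2) card_gt_0_iff[of Z] unfolding Z_def by simp_all
  define z where "z = Min Z"
  have "z \<in> Z" and z_min: "\<And>x. x \<in> Z \<Longrightarrow> z \<le> x"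
    using \<open>Z \<noteq> {}\<close> \<open>finite Z\<close> by (simp_all add: z_def)
  then have z: "z \<in> {a<..<b}" "h z = 0" "sign_change_at h z"
    using Suc.prems(6) by (auto simp: Z_def)
  have "h x \<noteq> 0" if "x \<in> {a<..<z}" for x
    using that z(1) z_min[of x] by (auto simp: Z_def)
  then obtain c where c: "z < c" "c < b" "h a * h c < 0"
    and zeros_c: "{x \<in> {c<..<b}. h x = 0} = Z - {z}"
    using sign_flip_past_least_zero[OF Suc.prems(1,3) z] unfolding Z_def by blast
  have card_c: "card {x \<in> {c<..<b}. h x = 0} = n"
    using Suc.hyps(2) \<open>z \<in> Z\<close> \<open>finite Z\<close> unfolding zeros_c Z_def[symmetric] by simp
  moreover have "odd (card {x \<in> {c<..<b}. h x = 0}) \<longleftrightarrow> h c * h b < 0"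
  proof (rule Suc.hyps(1))
    show "n = card {x \<in> {c<..<b}. h x = 0}"
      using card_c by simp
    show "continuous_on {c..b} h"
      using Suc.prems(1) by (rule continuous_on_subset) (use c z(1) in auto)
    show "finite {x \<in> {c<..<b}. h x = 0}"
      using \<open>finite Z\<close> unfolding zeros_c by simp
    show "sign_change_at h x" if "x \<in> {c<..<b}" "h x = 0" for x
      using Suc.prems(6) that c z(1) by auto
  qed (use c Suc.prems(4) in auto)
  moreover have "h a * h b < 0 \<longleftrightarrow> \<not> h c * h b < 0"
    using c(3) Suc.prems(4) by (metis mult_less_0_iff not_less_iff_gr_or_eq zero_less_mult_iff)
  ultimately show ?case
    using Suc.hyps(2) by (metis even_Suc)
qed

lemma finite_odd_zeros_if_nondegenerate:
  fixes h :: "real \<Rightarrow> real"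
  assumes "continuous_on {a..b} h" "a \<le> b" "h a * h b < 0"
    and diff: "\<And>x. x \<in> {a<..<b} \<Longrightarrow> h differentiable (at x)"
    and nondeg: "\<And>x. x \<in> {a<..<b} \<Longrightarrow> h x = 0 \<Longrightarrow> \<not> (h has_real_derivative 0) (at x)"
  shows "finite {x \<in> {a<..<b}. h x = 0} \<and> odd (card {x \<in> {a<..<b}. h x = 0})"
proof -
  have "sign_change_at h z" if "z \<in> {a<..<b}" "h z = 0" for z
  proof -
    obtain d where "(h has_real_derivative d) (at z)"
      using diff[OF \<open>z \<in> {a<..<b}\<close>] by (auto simp: real_differentiable_def)
    moreover have "d \<noteq> 0"
      using calculation nondeg that by auto
    ultimately show ?thesis
      using \<open>h z = 0\<close> by (rule sign_change_at_if_deriv_nonzero)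
  qed
  moreover have "h a \<noteq> 0" "h b \<noteq> 0"
    using \<open>h a * h b < 0\<close> by auto
  ultimately show ?thesis
    using finite_zeros_if_sign_changes[OF assms(1)] odd_card_zeros_iff_opposite_signs[OF assms(1,2)]
      \<open>h a * h b < 0\<close> by simp
qed

lemma has_real_derivative_at_if_within_Ici:
  assumes "(f has_real_derivative D) (at s within {a..})" "a < s"
  shows "(f has_real_derivative D) (at s)"
proof -
  have "at s within {a..} = at s"
    by (rule at_within_open_subset[of _ "{a<..}"]) (use \<open>a < s\<close> in auto)
  with assms(1) show ?thesis
    by simp
qed

lemma strict_mono_on_if_deriv_pos:
  fixes f f' :: "real \<Rightarrow> real"
  assumes "continuous_on {a..b} f"
    and "\<And>x. a < x \<Longrightarrow> x < b \<Longrightarrow> (f has_real_derivative f' x) (at x)"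
    and "\<And>x. a < x \<Longrightarrow> x < b \<Longrightarrow> f' x > 0"
  shows "strict_mono_on {a..b} f"
proof (rule strict_mono_onI)
  fix x y
  assume "x \<in> {a..b}" "y \<in> {a..b}" "x < y"
  show "f x < f y"
  proof (rule DERIV_pos_imp_increasing_open[OF \<open>x < y\<close>])
    show "\<exists>d. (f has_real_derivative d) (at t) \<and> d > 0" if "x < t" "t < y" for t
      using assms(2,3) that \<open>x \<in> {a..b}\<close> \<open>y \<in> {a..b}\<close> by (intro exI[of _ "f' t"]) auto
    show "continuous_on {x..y} f"
      using assms(1) by (rule continuous_on_subset) (use \<open>x \<in> {a..b}\<close> \<open>y \<in> {a..b}\<close> in auto)
  qed
qed

lemma strict_antimono_on_if_deriv_neg:
  fixes f f' :: "real \<Rightarrow> real"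
  assumes "continuous_on {a..} f"
    and "\<And>x. a < x \<Longrightarrow> (f has_real_derivative f' x) (at x)"
    and "\<And>x. a < x \<Longrightarrow> f' x < 0"
  shows "strict_antimono_on {a..} f"
proof (rule monotone_onI)
  fix x y
  assume "x \<in> {a..}" "y \<in> {a..}" "x < y"
  show "f y < f x"
  proof (rule DERIV_neg_imp_decreasing_open[OF \<open>x < y\<close>])
    show "\<exists>d. (f has_real_derivative d) (at t) \<and> d < 0" if "x < t" "t < y" for t
      using assms(2,3) that \<open>x \<in> {a..}\<close> by (intro exI[of _ "f' t"]) auto
    show "continuous_on {x..y} f"
      using assms(1) by (rule continuous_on_subset) (use \<open>x \<in> {a..}\<close> in auto)
  qed
qed

lemma pos_if_unimodal:
  fixes \<mu> :: "real \<Rightarrow> real"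
  assumes up: "strict_mono_on {0..m} \<mu>" and down: "strict_antimono_on {m..} \<mu>"
    and "\<mu> 0 = 0" and lim: "(\<mu> \<longlongrightarrow> 0) at_top" and "s > 0"
  shows "\<mu> s > 0"
proof (cases "s \<le> m")
  case True
  then show ?thesis
    using strict_mono_onD[OF up, of 0 s] \<open>\<mu> 0 = 0\<close> \<open>s > 0\<close> by simp
next
  case False
  have "\<mu> t \<le> \<mu> (s + 1)" if "t \<ge> s + 1" for t
    using that False monotone_onD[OF down, of "s + 1" t] by (cases "t = s + 1") auto
  then have "\<forall>\<^sub>F t in at_top. \<mu> t \<le> \<mu> (s + 1)"
    unfolding eventually_at_top_linorder by blast
  then have "0 \<le> \<mu> (s + 1)"
    using tendsto_upperbound[OF lim] by simp
  also have "\<mu> (s + 1) < \<mu> s"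
    using False by (intro monotone_onD[OF down]) auto
  finally show ?thesis .
qed

lemma strict_antimono_on_diff:
  fixes f g :: "'a::order \<Rightarrow> 'b::ordered_ab_group_add"
  assumes "strict_antimono_on S f" "strict_mono_on S g"
  shows "strict_antimono_on S (\<lambda>x. f x - g x)"
proof (rule monotone_onI)
  fix x y
  assume "x \<in> S" "y \<in> S" "x < y"
  then show "f y - g y < f x - g x"
    by (intro diff_strict_mono monotone_onD[OF assms(1)] strict_mono_onD[OF assms(2)])
qed

lemma ex1_zero_if_strict_antimono_on:
  fixes h :: "real \<Rightarrow> real"
  assumes "strict_antimono_on {a..b} h" "\<exists>x \<in> {a<..<b}. h x = 0"
  shows "\<exists>!x. x \<in> {a<..<b} \<and> h x = 0"
proof (rule ex_ex1I)
  show "\<exists>x. x \<in> {a<..<b} \<and> h x = 0"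
    using assms(2) by blast
  have "inj_on h {a..b}"
    using assms(1) by (simp add: strict_antimono_iff_antimono)
  then show "x = y" if "x \<in> {a<..<b} \<and> h x = 0" "y \<in> {a<..<b} \<and> h y = 0" for x y
    using that inj_onD[of h "{a..b}" x y] by auto
qed

lemma continuous_on_f2:
  assumes "continuous_on {0..} \<mu>" "k > 0"
  shows "continuous_on {..Sin / k} (f2 \<mu> Sin k)"
  unfolding f2_def
proof (rule continuous_on_compose2[OF assms(1)])
  show "(\<lambda>x. Sin - k * x) ` {..Sin / k} \<subseteq> {0..}"
    using \<open>k > 0\<close> by (auto simp: pos_le_divide_eq mult.commute)
qed (intro continuous_intros)

lemma continuous_on_f2_minus_g2:
  assumes "continuous_on {0..} \<mu>" "k > 0" "a > 0"
  shows "continuous_on {a..Sin / k} (\<lambda>x. f2 \<mu> Sin k x - g2 D Xs x)"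
proof (rule continuous_on_diff)
  show "continuous_on {a..Sin / k} (f2 \<mu> Sin k)"
    using continuous_on_f2[OF assms(1,2)] by (rule continuous_on_subset) auto
  show "continuous_on {a..Sin / k} (g2 D Xs)"
    unfolding g2_def using \<open>a > 0\<close> by (intro continuous_intros) auto
qed

lemma differentiable_f2_minus_g2:
  assumes "\<mu> differentiable (at (Sin - k * x))" "x \<noteq> 0"
  shows "(\<lambda>x. f2 \<mu> Sin k x - g2 D Xs x) differentiable (at x)"
proof (rule differentiable_diff)
  show "f2 \<mu> Sin k differentiable (at x)"
    unfolding f2_def using differentiable_chain_at[of "\<lambda>x. Sin - k * x" x \<mu>] assms(1)
    by (simp add: o_def)
  show "g2 D Xs differentiable (at x)"
    unfolding g2_def using \<open>x \<noteq> 0\<close> by (intro derivative_intros) auto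
qed

lemma f2_minus_g2_opposite_signs:
  assumes "\<mu> (Sin - k * Xs) > 0" "\<mu> 0 = 0" "D > 0" "k > 0" "0 < Xs" "Xs < Sin / k"
  shows "(f2 \<mu> Sin k Xs - g2 D Xs Xs) * (f2 \<mu> Sin k (Sin / k) - g2 D Xs (Sin / k)) < 0"
proof (rule mult_pos_neg)
  show "f2 \<mu> Sin k Xs - g2 D Xs Xs > 0"
    using assms(1,5) by (simp add: f2_def g2_def)
  have "g2 D Xs (Sin / k) > 0"
    unfolding g2_def by (rule divide_pos_pos) (use assms(3,5,6) in \<open>auto intro: mult_pos_pos\<close>)
  then show "f2 \<mu> Sin k (Sin / k) - g2 D Xs (Sin / k) < 0"
    using assms(2,4) by (simp add: f2_def)
qed

lemma strict_mono_on_g2: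
  assumes "D > 0" "Xs > 0"
  shows "strict_mono_on {0<..} (g2 D Xs)"
proof (rule strict_mono_onI)
  fix x y :: real
  assume "x \<in> {0<..}" "y \<in> {0<..}" "x < y"
  then have "D * Xs / y < D * Xs / x"
    using assms by (intro divide_strict_left_mono) auto
  moreover have "g2 D Xs x = D - D * Xs / x" "g2 D Xs y = D - D * Xs / y"
    using \<open>x \<in> {0<..}\<close> \<open>y \<in> {0<..}\<close> by (auto simp: g2_def field_simps)
  ultimately show "g2 D Xs x < g2 D Xs y"
    by simp
qed

lemma strict_antimono_on_f2:
  assumes "strict_mono_on {0..m} \<mu>" "k > 0"
  shows "strict_antimono_on {(Sin - m) / k..Sin / k} (f2 \<mu> Sin k)"
proof (rule monotone_onI)
  fix x y
  assume "x \<in> {(Sin - m) / k..Sin / k}" "y \<in> {(Sin - m) / k..Sin / k}" "x < y"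
  then have "Sin - k * y \<in> {0..m}" "Sin - k * x \<in> {0..m}" "Sin - k * y < Sin - k * x"
    using \<open>k > 0\<close> by (auto simp: field_simps)
  then show "f2 \<mu> Sin k y < f2 \<mu> Sin k x"
    unfolding f2_def by (rule strict_mono_onD[OF assms(1)])
qed

lemma strict_antimono_on_f2_minus_g2:
  assumes "strict_mono_on {0..m} \<mu>" "k > 0" "D > 0" "Xs > 0" "(Sin - m) / k \<le> Xs"
  shows "strict_antimono_on {Xs..Sin / k} (\<lambda>x. f2 \<mu> Sin k x - g2 D Xs x)"
  using assms(4,5)
  by (intro strict_antimono_on_diff
      monotone_on_subset[OF strict_antimono_on_f2[OF assms(1,2)]]
      monotone_on_subset[OF strict_mono_on_g2[OF assms(3,4)]]) auto

theorem lemmaA2: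
  fixes D2 k3 Sin S2m Xs :: real
    and \<mu>2 \<mu>2' :: "real \<Rightarrow> real"
  assumes D2: "D2 > 0" and k3: "k3 > 0" and Sin: "Sin > 0"
    and deriv: "\<And>s. s \<ge> 0 \<Longrightarrow> (\<mu>2 has_real_derivative \<mu>2' s) (at s within {0..})"
    and cont: "continuous_on {0..} \<mu>2'"
    and mu0: "\<mu>2 0 = 0"
    and lim: "(\<mu>2 \<longlongrightarrow> 0) at_top"
    and S2m: "S2m > 0"
    and incr: "\<And>s. 0 < s \<Longrightarrow> s < S2m \<Longrightarrow> \<mu>2' s > 0"
    and decr: "\<And>s. S2m < s \<Longrightarrow> \<mu>2' s < 0"
    and Xs: "Xs > 0" "Xs < Sin / k3"
  shows "(Xs \<ge> (Sin - S2m) / k3 \<longrightarrow>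
            (\<exists>!x. x \<in> {Xs<..<Sin / k3} \<and> f2 \<mu>2 Sin k3 x = g2 D2 Xs x))
       \<and> (Xs < (Sin - S2m) / k3 \<longrightarrow>
            (\<exists>x \<in> {Xs<..<Sin / k3}. f2 \<mu>2 Sin k3 x = g2 D2 Xs x)
          \<and> ((\<forall>x \<in> {Xs<..<Sin / k3}. f2 \<mu>2 Sin k3 x = g2 D2 Xs x \<longrightarrow>
                 \<not> ((\<lambda>y. f2 \<mu>2 Sin k3 y - g2 D2 Xs y) has_real_derivative 0) (at x))
             \<longrightarrow> finite {x \<in> {Xs<..<Sin / k3}. f2 \<mu>2 Sin k3 x = g2 D2 Xs x}
               \<and> odd (card {x \<in> {Xs<..<Sin / k3}. f2 \<mu>2 Sin k3 x = g2 D2 Xs x})))"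
proof -
  let ?h = "\<lambda>x. f2 \<mu>2 Sin k3 x - g2 D2 Xs x"
  have \<mu>_deriv: "(\<mu>2 has_real_derivative \<mu>2' s) (at s)" if "s > 0" for s
    using has_real_derivative_at_if_within_Ici[OF deriv] that by simp
  have \<mu>_diff: "\<mu>2 differentiable (at s)" if "s > 0" for s
    using \<mu>_deriv[OF that] by (auto simp: real_differentiable_def)
  have \<mu>_cont: "continuous_on {0..} \<mu>2"
    using deriv by (auto simp: continuous_on_eq_continuous_within intro: DERIV_continuous)
  have \<mu>_up: "strict_mono_on {0..S2m} \<mu>2"
    using continuous_on_subset[OF \<mu>_cont] \<mu>_deriv incr
    by (intro strict_mono_on_if_deriv_pos[where f' = \<mu>2']) auto
  have \<mu>_down: "strict_antimono_on {S2m..} \<mu>2"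
    using continuous_on_subset[OF \<mu>_cont] \<mu>_deriv decr S2m
    by (intro strict_antimono_on_if_deriv_neg[where f' = \<mu>2']) auto
  have h_cont: "continuous_on {Xs..Sin / k3} ?h"
    using \<mu>_cont k3 Xs(1) by (rule continuous_on_f2_minus_g2)
  have h_signs: "?h Xs * ?h (Sin / k3) < 0"
    using pos_if_unimodal[OF \<mu>_up \<mu>_down mu0 lim, of "Sin - k3 * Xs"] Xs k3 D2 mu0
    by (intro f2_minus_g2_opposite_signs) (auto simp: field_simps)
  have zero: "\<exists>x \<in> {Xs<..<Sin / k3}. ?h x = 0"
    using zero_between_opposite_signs[OF h_cont _ h_signs] Xs by simp
  have "\<exists>!x. x \<in> {Xs<..<Sin / k3} \<and> ?h x = 0" if "Xs \<ge> (Sin - S2m) / k3"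
    using strict_antimono_on_f2_minus_g2[OF \<mu>_up k3 D2 Xs(1) that] zero
    by (rule ex1_zero_if_strict_antimono_on)
  moreover have "finite {x \<in> {Xs<..<Sin / k3}. ?h x = 0} \<and> odd (card {x \<in> {Xs<..<Sin / k3}. ?h x = 0})"
    if "\<forall>x \<in> {Xs<..<Sin / k3}. ?h x = 0 \<longrightarrow> \<not> (?h has_real_derivative 0) (at x)"
    using Xs k3 that
    by (intro finite_odd_zeros_if_nondegenerate[OF h_cont _ h_signs] differentiable_f2_minus_g2 \<mu>_diff)
      (auto simp: field_simps)
  ultimately show ?thesis
    using zero by simp
qed

end
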